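(* Let $\varrho : \mathbb{R} \to \mathbb{R}$ be measurable with $\varrho(0) = 0$ and let $d, \sigma \in \mathbb{N}$. For $W \in \mathbb{N}$, define \[ \mathcal{NN}^{\sigma,\varrho}_{d,W} := \{ R_\varrho\Phi : \Phi \text{ is a } (\sigma,W)\text{-quantized NN with } W(\Phi) \le W,\ d_{\mathrm{in}}(\Phi) = d,\ d_{\mathrm{out}}(\Phi) = 1\}. \] Let $\emptyset\neq\Omega\subset\mathbb{R}^d$ be a bounded Lipschitz domain, let $\mathcal{S}$, $s^\ast$ be either (a) $\mathcal{S} = \mathcal{B}(0,1;B^\tau_{p,q}(\Omega;\mathbb{R}))$, $s^\ast=\tau/d$ with $p,q\in(0,\infty]$, $\tau>d(\frac1p-\frac12)_+$, or (b) $\mathcal{S}=\mathcal{B}(0,1;W^{k,p}(\Omega))$, $s^\ast=k/d$ with $p\in[1,\infty]$, $k\in\mathbb{N}$, $k>d(\frac1p-\frac12)_+$, and let $\mathbb{P}$ be the Borel probability measure on $\mathcal{S}$ constructed for the phase-transition theorem for these classes. Then: 1. There is $C = C(d,\sigma) \in \mathbb{N}$ such that for each $s > s^\ast$ there are $c,\varepsilon_0 > 0$ satisfying \[ \mathbb{P}^\ast\Big(\Big\{f\in\mathcal{S} : \min_{g \in \mathcal{NN}^{\sigma,\varrho}_{d,W}} \|f - g\|_{L^2(\Omega)} \le \varepsilon\Big\}\Big) \le 2^{C \cdot W \lceil \log_2(1+W)\rceil^2 - c\cdot\varepsilon^{-1/s}} \qquad \forall\, \varepsilon\in(0,\varepsilon_0)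 \] (for every $W\in\mathbb{N}$). 2. If we define $W^{\sigma,\varrho}_\varepsilon(f) := \inf\{W \in \mathbb{N} : \exists\, g \in \mathcal{NN}^{\sigma,\varrho}_{d,W} \text{ with } \|f-g\|_{L^2(\Omega)} \le \varepsilon\} \in \mathbb{N}\cup\{\infty\}$ and \[ \mathcal{A}^\ast_{\mathcal{NN},\varrho} := \{ f \in \mathcal{S} : \exists\, \tau \in (0,\tfrac{1}{s^\ast}),\ \sigma\in\mathbb{N},\ C>0 \ \forall\, \varepsilon\in(0,1): W^{\sigma,\varrho}_\varepsilon(f) \le C\cdot\varepsilon^{-\tau}\}, \] then $\mathbb{P}^\ast(\mathcal{A}^\ast_{\mathcal{NN},\varrho}) = 0$.
   Context: A neural network with architecture $(N_0,\dots,N_L)$, $N_0=d$, is a tuple $\Phi=((A_1,b_1),\dots,(A_L,b_L))$ with $A_\ell\in\mathbb{R}^{N_\ell\times N_{\ell-1}}$, $b_\ell\in\mathbb{R}^{N_\ell}$; its realization is $R_\varrho\Phi:\mathbb{R}^d\to\mathbb{R}^{N_L}$, $x\mapsto x^{(L)}$, with $x^{(0)}=x$, $x^{(\ell+1)}=\varrho(A_{\ell+1}x^{(\ell)}+b_{\ell+1})$ for $0\le\ell\le L-2$ (componentwise $\varrho$) and $x^{(L)}=A_Lx^{(L-1)}+b_L$. $W(\Phi)=\sum_\ell(\|A_\ell\|_{\ell^0}+\|b_\ell\|_{\ell^0})$ is the number of nonzero weights, $d_{\mathrm{in}}(\Phi)=N_0$, $d_{\mathrm{out}}(\Phi)=N_L$.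 $\Phi$ is $(\sigma,W)$-quantized if all entries of all $A_\ell,b_\ell$ lie in $[-W^{\sigma\lceil\log_2 W\rceil},W^{\sigma\lceil\log_2 W\rceil}]\cap 2^{-\sigma\lceil\log_2 W\rceil^2}\mathbb{Z}$. $\mathbb{P}^\ast$ is the outer measure induced by $\mathbb{P}$. The measure $\mathbb{P}$ is critical: for every $s>s^\ast$ there exist $c,\varepsilon_0>0$ with $\mathbb{P}(\mathcal{S}\cap\mathcal{B}(g,\varepsilon;L^2(\Omega)))\le 2^{-c\varepsilon^{-1/s}}$ for all $g\in L^2(\Omega)$, $\varepsilon\in(0,\varepsilon_0)$; $s^\ast$ equals the optimal compression rate of $\mathcal{S}$ in $L^2(\Omega)$. $\mathcal{B}(\mathbf{x},r;\mathbf{X})$ denotes the closed ball. *)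

theory Defs
  imports "HOL-Probability.Probability"
begin

text \<open>A network is
  (Ns, (A1,b1), Ls) where Ns = [N_1,...,N_L] are the layer widths,
  A1 : N_1 x d, b1 : N_1 is the first layer (columns indexed by the
  coordinates of the input space real^'d), and Ls = [(A_2,b_2),...,(A_L,b_L)]
  with A_l : N_l x N_(l-1).  Entries outside the index ranges are ignored.\<close>

type_synonym layer = "(nat \<Rightarrow> nat \<Rightarrow> real) \<times> (nat \<Rightarrow> real)"
type_synonym 'd network =
  "nat list \<times> ((nat \<Rightarrow> 'd \<Rightarrow> real) \<times> (nat \<Rightarrow> real)) \<times> layer list"

definition nn_valid :: "'d network \<Rightarrow> bool" where
  "nn_valid \<Phi> = (case \<Phi> of (Ns, _, Ls) \<Rightarrow> length Ns = Suc (length Ls))"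

definition d_out :: "'d network \<Rightarrow> nat" where
  "d_out \<Phi> = last (fst \<Phi>)"

text \<open>Given the pre-activation z of the current layer (width n), apply the
  remaining layers: x^(l) = rho(z), next pre-activation = A x^(l) + b;
  the last layer is affine (no activation).\<close>
fun rt :: "(real \<Rightarrow> real) \<Rightarrow> nat \<Rightarrow> (nat \<Rightarrow> real) \<Rightarrow> nat list \<Rightarrow> layer list \<Rightarrow> (nat \<Rightarrow> real)" where
  "rt \<rho> n z (m # ms) ((A, b) # Ls) = rt \<rho> m (\<lambda>i. (\<Sum>j<n. A i j * \<rho> (z j)) + b i) ms Ls"
| "rt \<rho> n z _ _ = z"

text \<open>Realization (scalar output, i.e. component 0; used only when d_out = 1).\<close>
definition realize :: "(real \<Rightarrow> real) \<Rightarrow> ('d::finite) network \<Rightarrow> real^'d \<Rightarrow> real" where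
  "realize \<rho> \<Phi> x = (case \<Phi> of (Ns, (A1, b1), Ls) \<Rightarrow>
     rt \<rho> (hd Ns) (\<lambda>i. (\<Sum>j\<in>UNIV. A1 i j * x $ j) + b1 i) (tl Ns) Ls 0)"

fun wt :: "nat \<Rightarrow> nat list \<Rightarrow> layer list \<Rightarrow> nat" where
  "wt n (m # ms) ((A, b) # Ls) =
     card {(i, j). i < m \<and> j < n \<and> A i j \<noteq> 0} + card {i. i < m \<and> b i \<noteq> 0} + wt m ms Ls"
| "wt _ _ _ = 0"

definition nweights :: "('d::finite) network \<Rightarrow> nat" where
  "nweights \<Phi> = (case \<Phi> of (Ns, (A1, b1), Ls) \<Rightarrow>
     card {(i, j). i < hd Ns \<and> A1 i j \<noteq> 0} + card {i. i < hd Ns \<and> b1 i \<noteq> 0}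
     + wt (hd Ns) (tl Ns) Ls)"

definition qgrid :: "nat \<Rightarrow> nat \<Rightarrow> real \<Rightarrow> bool" where
  "qgrid \<sigma> W x = (let k = nat \<lceil>log 2 (real W)\<rceil> in
     \<bar>x\<bar> \<le> real W ^ (\<sigma> * k) \<and> x * 2 ^ (\<sigma> * k\<^sup>2) \<in> \<int>)"

fun qt :: "nat \<Rightarrow> nat \<Rightarrow> nat \<Rightarrow> nat list \<Rightarrow> layer list \<Rightarrow> bool" where
  "qt \<sigma> W n (m # ms) ((A, b) # Ls) =
     ((\<forall>i<m. (\<forall>j<n. qgrid \<sigma> W (A i j)) \<and> qgrid \<sigma> W (b i)) \<and> qt \<sigma> W m ms Ls)"
| "qt _ _ _ _ _ = True"

definition quantized :: "nat \<Rightarrow> nat \<Rightarrow> ('d::finite) network \<Rightarrow> bool" where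
  "quantized \<sigma> W \<Phi> = (case \<Phi> of (Ns, (A1, b1), Ls) \<Rightarrow>
     (\<forall>i<hd Ns. (\<forall>j. qgrid \<sigma> W (A1 i j)) \<and> qgrid \<sigma> W (b1 i)) \<and> qt \<sigma> W (hd Ns) (tl Ns) Ls)"

definition NNset :: "(real \<Rightarrow> real) \<Rightarrow> nat \<Rightarrow> nat \<Rightarrow> (real^'d::finite \<Rightarrow> real) set" where
  "NNset \<rho> \<sigma> W = {realize \<rho> \<Phi> | \<Phi>. nn_valid \<Phi> \<and> d_out \<Phi> = 1 \<and> quantized \<sigma> W \<Phi> \<and> nweights \<Phi> \<le> W}"

text \<open>L^2(Omega), represented by Borel measurable functions on real^'d.\<close>
definition L2set :: "(real^'d::finite) set \<Rightarrow> (real^'d \<Rightarrow> real) set" where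
  "L2set \<Omega> = {f. f \<in> borel_measurable lborel \<and> (\<integral>\<^sup>+ x\<in>\<Omega>. ennreal ((f x)\<^sup>2) \<partial>lborel) < \<infinity>}"

definition l2ball :: "(real^'d::finite) set \<Rightarrow> (real^'d \<Rightarrow> real) \<Rightarrow> real \<Rightarrow> (real^'d \<Rightarrow> real) set" where
  "l2ball \<Omega> g \<epsilon> = {f \<in> L2set \<Omega>. (\<integral>\<^sup>+ x\<in>\<Omega>. ennreal ((f x - g x)\<^sup>2) \<partial>lborel) \<le> ennreal (\<epsilon>\<^sup>2)}"

definition outer_prob :: "'a measure \<Rightarrow> 'a set \<Rightarrow> real" where
  "outer_prob P A = Inf {measure P B | B. B \<in> sets P \<and> A \<subseteq> B}"

text \<open>Standing setting: Omega a nonempty bounded domain, S a subset of L^2(Omega),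
  P a Borel probability measure on S (Borel sigma-algebra of S w.r.t. the
  L^2 metric, generated by the closed balls since L^2 is separable) which is
  critical with exponent s* > 0.\<close>
definition critical_setting ::
  "(real^'d::finite) set \<Rightarrow> (real^'d \<Rightarrow> real) set \<Rightarrow> (real^'d \<Rightarrow> real) measure \<Rightarrow> real \<Rightarrow> bool" where
  "critical_setting \<Omega> S P s_star =
    (\<Omega> \<noteq> {} \<and> open \<Omega> \<and> connected \<Omega> \<and> bounded \<Omega> \<and>
     S \<subseteq> L2set \<Omega> \<and> prob_space P \<and> space P = S \<and>
     sets P = sigma_sets S {S \<inter> l2ball \<Omega> g \<epsilon> | g \<epsilon>. g \<in> L2set \<Omega> \<and> \<epsilon> > 0} \<and>
     s_star > 0 \<and>
     (\<forall>s>s_star. \<exists>c>0. \<exists>\<epsilon>0>0. \<forall>g\<in>L2set \<Omega>. \<forall>\<epsilon>. 0 < \<epsilon> \<and> \<epsilon> < \<epsilon>0 \<longrightarrow>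
        measure P (S \<inter> l2ball \<Omega> g \<epsilon>) \<le> 2 powr (- c * \<epsilon> powr (-1 / s))))"

definition Weps :: "(real \<Rightarrow> real) \<Rightarrow> nat \<Rightarrow> (real^'d::finite) set \<Rightarrow> real \<Rightarrow> (real^'d \<Rightarrow> real) \<Rightarrow> enat" where
  "Weps \<rho> \<sigma> \<Omega> \<epsilon> f = (INF W \<in> {W. W \<ge> 1 \<and> (\<exists>g\<in>NNset \<rho> \<sigma> W. f \<in> l2ball \<Omega> g \<epsilon>)}. enat W)"

definition Astar :: "(real \<Rightarrow> real) \<Rightarrow> (real^'d::finite) set \<Rightarrow> (real^'d \<Rightarrow> real) set \<Rightarrow> real \<Rightarrow> (real^'d \<Rightarrow> real) set" where
  "Astar \<rho> \<Omega> S s_star = {f \<in> S. \<exists>\<tau>. 0 < \<tau> \<and> \<tau> < 1 / s_star \<and> (\<exists>\<sigma>::nat. \<sigma> \<ge> 1 \<and> (\<exists>C>0.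
      \<forall>\<epsilon>. 0 < \<epsilon> \<and> \<epsilon> < 1 \<longrightarrow>
        Weps \<rho> \<sigma> \<Omega> \<epsilon> f \<noteq> \<infinity> \<and> real (the_enat (Weps \<rho> \<sigma> \<Omega> \<epsilon> f)) \<le> C * \<epsilon> powr (- \<tau>)))}"

end

theory Submission
  imports Defs "HOL-Real_Asymp.Real_Asymp"
begin

text \<open>A \<open>(\<sigma>, W)\<close>-quantized network with at most \<open>W\<close> nonzero weights computes the same
  function as a straight-line program with at most \<open>W\<close> weighted edges and \<open>W + 1\<close> gates, all
  weights taken from a finite grid of size \<open>2^O(\<sigma> log\<^sup>2 W)\<close>.  Writing such a program as a
  string of at most \<open>2W + 1\<close> tokens shows that there are at most \<open>2^(C W \<lceil>log\<^sub>2(1+W)\<rceil>\<^sup>2)\<close>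
  realizations.  The \<open>\<epsilon>\<close>-approximable functions are therefore covered by that many
  \<open>L\<^sup>2\<close>-balls, each of measure at most \<open>2^(-c \<epsilon>^(-1/s))\<close> by criticality, which is part 1.
  For part 2, the functions approximable with \<open>W \<le> n \<epsilon>^(-q)\<close> for every \<open>\<epsilon>\<close>, where
  \<open>q < 1/s\<^sup>*\<close>, lie for each \<open>\<epsilon>\<close> in a set of measure at most
  \<open>n \<epsilon>^(-q) 2^(C' \<epsilon>^(-q) log\<^sup>2(1/\<epsilon>) - c \<epsilon>^(-1/s))\<close>, which tends to \<open>0\<close> once
  \<open>s\<^sup>* < s < 1/q\<close>; \<open>A\<^sup>*\<close> is a countable union of such null sets.\<close>

section \<open>Straight-line programs\<close>

datatype 'l src = Inp 'l | Ref nat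

type_synonym 'l gate = "real \<times> (real \<times> 'l src) list"

text \<open>A gate is a bias together with weighted incoming edges.\<close>

fun src_val :: "(real \<Rightarrow> real) \<Rightarrow> ('l \<Rightarrow> real) \<Rightarrow> real list \<Rightarrow> 'l src \<Rightarrow> real" where
  "src_val \<rho> x vs (Inp l) = x l"
| "src_val \<rho> x vs (Ref u) = \<rho> (vs ! u)"

definition gate_val :: "(real \<Rightarrow> real) \<Rightarrow> ('l \<Rightarrow> real) \<Rightarrow> real list \<Rightarrow> 'l gate \<Rightarrow> real" where
  "gate_val \<rho> x vs g = fst g + (\<Sum>(a, r)\<leftarrow>snd g. a * src_val \<rho> x vs r)"

fun prog_vals :: "(real \<Rightarrow> real) \<Rightarrow> ('l \<Rightarrow> real) \<Rightarrow> real list \<Rightarrow> 'l gate list \<Rightarrow> real list" where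
  "prog_vals \<rho> x vs [] = vs"
| "prog_vals \<rho> x vs (g # P) = prog_vals \<rho> x (vs @ [gate_val \<rho> x vs g]) P"

definition prog_eval :: "(real \<Rightarrow> real) \<Rightarrow> ('l \<Rightarrow> real) \<Rightarrow> 'l gate list \<Rightarrow> real" where
  "prog_eval \<rho> x P = last (prog_vals \<rho> x [] P)"

definition prog_inputs :: "'l gate list \<Rightarrow> 'l set" where
  "prog_inputs P = {l. \<exists>g\<in>set P. \<exists>a. (a, Inp l) \<in> set (snd g)}"

definition prog_edges :: "'l gate list \<Rightarrow> nat" where
  "prog_edges P = sum_list (map (length \<circ> snd) P)"

definition reads_inputs :: "'l gate \<Rightarrow> bool" where
  "reads_inputs g \<longleftrightarrow> (\<forall>e\<in>set (snd g). \<exists>l. snd e = Inp l)"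

definition shift_src :: "(nat \<Rightarrow> nat) \<Rightarrow> nat \<Rightarrow> nat src \<Rightarrow> 'm src" where
  "shift_src ix k r = (case r of Inp i \<Rightarrow> Ref (ix i) | Ref u \<Rightarrow> Ref (u + k))"

definition shift_gate :: "(nat \<Rightarrow> nat) \<Rightarrow> nat \<Rightarrow> nat gate \<Rightarrow> 'm gate" where
  "shift_gate ix k g = (fst g, map (\<lambda>(a, r). (a, shift_src ix k r)) (snd g))"

text \<open>Only the inputs that \<open>P\<close> actually reads get a gate \<open>N i\<close>, placed in front of \<open>P\<close>
  at position \<open>ix i\<close>; edges from input \<open>i\<close> become edges from that gate, and references to
  the old gates are shifted past the new ones.\<close>

definition prog_subst :: "(nat \<Rightarrow> 'm gate) \<Rightarrow> nat gate list \<Rightarrow> 'm gate list" where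
  "prog_subst N P = (let L = sorted_list_of_set (prog_inputs P);
                         ix = (\<lambda>i. SOME k. k < length L \<and> L ! k = i)
                     in map N L @ map (shift_gate ix (length L)) P)"

lemma finite_prog_inputs: "finite (prog_inputs P)"
proof -
  have "prog_inputs P \<subseteq> (\<Union>g\<in>set P. (\<lambda>e. case snd e of Inp l \<Rightarrow> l) ` set (snd g))"
    unfolding prog_inputs_def by force
  then show ?thesis by (rule finite_subset) auto
qed

lemma prog_inputs_Cons: "prog_inputs (g # P) = {l. \<exists>a. (a, Inp l) \<in> set (snd g)} \<union> prog_inputs P"
  unfolding prog_inputs_def by auto

lemma card_prog_inputs_single_le: "card (prog_inputs [g]) \<le> length (snd g)"
proof -
  have "prog_inputs [g] \<subseteq> (\<lambda>e. case snd e of Inp l \<Rightarrow> l) ` set (snd g)"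
    unfolding prog_inputs_def by force
  then have "card (prog_inputs [g]) \<le> card (set (snd g))"
    by (meson List.finite_set card_image_le card_mono finite_imageI order_trans)
  also have "\<dots> \<le> length (snd g)" by (rule card_length)
  finally show ?thesis .
qed

lemma length_prog_vals: "length (prog_vals \<rho> x vs P) = length vs + length P"
  by (induction P arbitrary: vs) auto

lemma prog_vals_append: "prog_vals \<rho> x vs (P @ Q) = prog_vals \<rho> x (prog_vals \<rho> x vs P) Q"
  by (induction P arbitrary: vs) auto

lemma prog_subst_eq:
  obtains ix where
    "prog_subst N P = map N (sorted_list_of_set (prog_inputs P))
                      @ map (shift_gate ix (card (prog_inputs P))) P"
    "\<And>i. i \<in> prog_inputs P \<Longrightarrow>
       ix i < card (prog_inputs P) \<and> sorted_list_of_set (prog_inputs P) ! ix i = i"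
proof
  let ?L = "sorted_list_of_set (prog_inputs P)"
  let ?ix = "\<lambda>i. SOME k. k < length ?L \<and> ?L ! k = i"
  show "prog_subst N P = map N ?L @ map (shift_gate ?ix (card (prog_inputs P))) P"
    by (simp add: prog_subst_def Let_def)
  fix i assume "i \<in> prog_inputs P"
  then have "\<exists>k. k < length ?L \<and> ?L ! k = i"
    by (metis finite_prog_inputs in_set_conv_nth set_sorted_list_of_set)
  from someI_ex[OF this] show "?ix i < card (prog_inputs P) \<and> ?L ! ?ix i = i" by simp
qed

lemma gate_val_shift:
  assumes "\<And>i a. (a, Inp i) \<in> set (snd g) \<Longrightarrow> ix i < length vs0 \<and> x i = \<rho> (vs0 ! ix i)"
  shows "gate_val \<rho> x' (vs0 @ vs) (shift_gate ix (length vs0) g) = gate_val \<rho> x vs g"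
proof -
  have "map (\<lambda>(a, r). a * src_val \<rho> x' (vs0 @ vs) r) (snd (shift_gate ix (length vs0) g))
        = map (\<lambda>(a, r). a * src_val \<rho> x vs r) (snd g)"
    unfolding shift_gate_def snd_conv map_map
    by (rule map_cong[OF refl]) (use assms in \<open>auto simp: shift_src_def nth_append split: src.split\<close>)
  moreover have "fst (shift_gate ix (length vs0) g) = fst g" by (simp add: shift_gate_def)
  ultimately show ?thesis unfolding gate_val_def by metis
qed

lemma gate_val_reads_inputs:
  assumes "reads_inputs g"
  shows "gate_val \<rho> x vs g = gate_val \<rho> x [] g"
proof -
  have "map (\<lambda>(a, r). a * src_val \<rho> x vs r) (snd g) = map (\<lambda>(a, r). a * src_val \<rho> x [] r) (snd g)"
  proof (rule map_cong[OF refl])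
    fix e assume "e \<in> set (snd g)"
    then obtain l where "snd e = Inp l" using assms unfolding reads_inputs_def by blast
    then show "(\<lambda>(a, r). a * src_val \<rho> x vs r) e = (\<lambda>(a, r). a * src_val \<rho> x [] r) e"
      by (cases e) simp
  qed
  then show ?thesis unfolding gate_val_def by metis
qed

lemma prog_vals_shift:
  assumes "\<And>i. i \<in> prog_inputs P \<Longrightarrow> ix i < length vs0 \<and> x i = \<rho> (vs0 ! ix i)"
  shows "prog_vals \<rho> x' (vs0 @ vs) (map (shift_gate ix (length vs0)) P) = vs0 @ prog_vals \<rho> x vs P"
  using assms
proof (induction P arbitrary: vs)
  case (Cons g P)
  have "gate_val \<rho> x' (vs0 @ vs) (shift_gate ix (length vs0) g) = gate_val \<rho> x vs g"
    by (rule gate_val_shift) (use Cons.prems in \<open>auto simp: prog_inputs_Cons\<close>)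
  with Cons show ?case by (simp add: prog_inputs_Cons)
qed simp

lemma prog_vals_reads_inputs:
  assumes "\<And>i. reads_inputs (N i)"
  shows "prog_vals \<rho> x vs (map N L) = vs @ map (\<lambda>i. gate_val \<rho> x [] (N i)) L"
proof (induction L arbitrary: vs)
  case (Cons i L)
  then show ?case using gate_val_reads_inputs[OF assms, of \<rho> x vs i] by simp
qed simp

lemma prog_eval_subst:
  assumes "P \<noteq> []" "\<And>i. reads_inputs (N i)"
  shows "prog_eval \<rho> x (prog_subst N P) = prog_eval \<rho> (\<lambda>i. \<rho> (gate_val \<rho> x [] (N i))) P"
proof -
  let ?L = "sorted_list_of_set (prog_inputs P)"
  let ?x' = "\<lambda>i. \<rho> (gate_val \<rho> x [] (N i))"
  obtain ix where sub: "prog_subst N P = map N ?L @ map (shift_gate ix (card (prog_inputs P))) P"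
    and ix: "\<And>i. i \<in> prog_inputs P \<Longrightarrow> ix i < card (prog_inputs P) \<and> ?L ! ix i = i"
    using prog_subst_eq[of N P] by blast
  define vs0 where "vs0 = map (\<lambda>i. gate_val \<rho> x [] (N i)) ?L"
  have len: "length vs0 = card (prog_inputs P)" by (simp add: vs0_def)
  have "ix i < length vs0 \<and> ?x' i = \<rho> (vs0 ! ix i)" if "i \<in> prog_inputs P" for i
    using ix[OF that] by (simp add: vs0_def)
  then have "prog_vals \<rho> x vs0 (map (shift_gate ix (length vs0)) P) = vs0 @ prog_vals \<rho> ?x' [] P"
    using prog_vals_shift[of P ix vs0 ?x' \<rho> x "[]"] by simp
  then have "prog_vals \<rho> x [] (prog_subst N P) = vs0 @ prog_vals \<rho> ?x' [] P"
    by (simp add: sub prog_vals_append prog_vals_reads_inputs[OF assms(2)] vs0_def len)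
  moreover have "prog_vals \<rho> ?x' [] P \<noteq> []"
    using assms(1) length_prog_vals[of \<rho> ?x' "[]" P] by auto
  ultimately show ?thesis by (simp add: prog_eval_def)
qed

definition on_grid :: "nat \<Rightarrow> nat \<Rightarrow> 'l gate list \<Rightarrow> bool" where
  "on_grid \<sigma> W P \<longleftrightarrow> (\<forall>g\<in>set P. qgrid \<sigma> W (fst g) \<and> (\<forall>e\<in>set (snd g). qgrid \<sigma> W (fst e)))"

definition refs_bounded :: "'l gate list \<Rightarrow> bool" where
  "refs_bounded P \<longleftrightarrow> (\<forall>g\<in>set P. \<forall>e\<in>set (snd g). \<forall>u. snd e = Ref u \<longrightarrow> u < length P)"

text \<open>The size condition charges every gate except the output, and every input, to a
  distinct edge; it is what bounds the number of gates by the number of weights.\<close>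

definition wf_prog :: "nat \<Rightarrow> nat \<Rightarrow> 'l gate list \<Rightarrow> bool" where
  "wf_prog \<sigma> W P \<longleftrightarrow> P \<noteq> [] \<and> length P + card (prog_inputs P) \<le> prog_edges P + 1 \<and>
     on_grid \<sigma> W P \<and> refs_bounded P"

lemma length_prog_subst: "length (prog_subst N P) = card (prog_inputs P) + length P"
  by (simp add: prog_subst_def Let_def)

lemma prog_edges_subst:
  "prog_edges (prog_subst N P) = (\<Sum>i\<in>prog_inputs P. length (snd (N i))) + prog_edges P"
proof -
  have "prog_edges (map (shift_gate ix k) P) = prog_edges P" for ix k
    by (induction P) (simp_all add: prog_edges_def shift_gate_def)
  moreover have "prog_edges (map N (sorted_list_of_set (prog_inputs P)))
                 = (\<Sum>i\<in>prog_inputs P. length (snd (N i)))"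
    by (simp add: prog_edges_def sum_list_distinct_conv_sum_set finite_prog_inputs)
  ultimately show ?thesis by (simp add: prog_subst_def Let_def prog_edges_def)
qed

lemma prog_inputs_subst: "prog_inputs (prog_subst N P) = (\<Union>i\<in>prog_inputs P. prog_inputs [N i])"
proof -
  have shifted: "prog_inputs (map (shift_gate ix k) P :: 'm gate list) = {}" for ix k
    by (auto simp: prog_inputs_def shift_gate_def shift_src_def split: src.splits)
  have front: "prog_inputs (map N L) = (\<Union>i\<in>set L. prog_inputs [N i])" for L
    by (auto simp: prog_inputs_def)
  have append: "prog_inputs (Q @ R) = prog_inputs Q \<union> prog_inputs R" for Q R :: "'m gate list"
    by (auto simp: prog_inputs_def)
  show ?thesis
    unfolding prog_subst_def Let_def append front shifted by (simp add: finite_prog_inputs)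
qed

lemma card_prog_inputs_subst_le:
  "card (prog_inputs (prog_subst N P)) \<le> (\<Sum>i\<in>prog_inputs P. length (snd (N i)))"
proof -
  have "card (prog_inputs (prog_subst N P)) \<le> (\<Sum>i\<in>prog_inputs P. card (prog_inputs [N i]))"
    unfolding prog_inputs_subst by (rule card_UN_le[OF finite_prog_inputs])
  also have "\<dots> \<le> (\<Sum>i\<in>prog_inputs P. length (snd (N i)))"
    by (intro sum_mono card_prog_inputs_single_le)
  finally show ?thesis .
qed

lemma refs_bounded_subst:
  assumes "\<And>i. reads_inputs (N i)" and "refs_bounded P"
  shows "refs_bounded (prog_subst N P)"
  unfolding refs_bounded_def
proof (intro ballI allI impI)
  let ?k = "card (prog_inputs P)"
  obtain ix where sub: "prog_subst N P = map N (sorted_list_of_set (prog_inputs P))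
                      @ map (shift_gate ix ?k) P"
    and ix: "\<And>i. i \<in> prog_inputs P \<Longrightarrow> ix i < ?k \<and> sorted_list_of_set (prog_inputs P) ! ix i = i"
    using prog_subst_eq[of N P] by blast
  fix g e u
  assume g: "g \<in> set (prog_subst N P)" and e: "e \<in> set (snd g)" and u: "snd e = Ref u"
  from g consider (front) i where "g = N i" | (shifted) g0 where "g0 \<in> set P" "g = shift_gate ix ?k g0"
    unfolding sub by auto
  then show "u < length (prog_subst N P)"
  proof cases
    case front
    then show ?thesis using assms(1)[of i] e u by (auto simp: reads_inputs_def)
  next
    case shifted
    then obtain a r where ar: "(a, r) \<in> set (snd g0)" "e = (a, shift_src ix ?k r)"
      using e by (auto simp: shift_gate_def)
    show ?thesis
    proof (cases r)
      case (Inp i)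
      then have "i \<in> prog_inputs P" using ar(1) shifted(1) by (auto simp: prog_inputs_def)
      then show ?thesis using ix[of i] u ar(2) Inp by (auto simp: shift_src_def length_prog_subst)
    next
      case (Ref v)
      then have "v < length P" using assms(2) ar(1) shifted(1) by (fastforce simp: refs_bounded_def)
      then show ?thesis using u ar(2) Ref by (auto simp: shift_src_def length_prog_subst)
    qed
  qed
qed

lemma on_grid_subst:
  assumes "on_grid \<sigma> W P" and "\<forall>i\<in>prog_inputs P. on_grid \<sigma> W [N i]"
  shows "on_grid \<sigma> W (prog_subst N P)"
proof -
  have "on_grid \<sigma> W (map (shift_gate ix k) P)" for ix k
    using assms(1) unfolding on_grid_def shift_gate_def by fastforce
  moreover have "on_grid \<sigma> W (map N (sorted_list_of_set (prog_inputs P)))"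
    using assms(2) by (auto simp: on_grid_def finite_prog_inputs)
  ultimately show ?thesis
    by (auto simp: on_grid_def prog_subst_def Let_def simp del: set_map)
qed

lemma wf_prog_subst:
  assumes "\<And>i. reads_inputs (N i)" and "wf_prog \<sigma> W P"
    and "\<forall>i\<in>prog_inputs P. on_grid \<sigma> W [N i]"
  shows "wf_prog \<sigma> W (prog_subst N P)"
proof -
  have "length (prog_subst N P) + card (prog_inputs (prog_subst N P))
        \<le> card (prog_inputs P) + length P + (\<Sum>i\<in>prog_inputs P. length (snd (N i)))"
    using card_prog_inputs_subst_le[of N P] by (simp add: length_prog_subst)
  also have "\<dots> \<le> prog_edges (prog_subst N P) + 1"
    using assms(2) by (simp add: wf_prog_def prog_edges_subst)
  finally have "length (prog_subst N P) + card (prog_inputs (prog_subst N P))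
                \<le> prog_edges (prog_subst N P) + 1" .
  moreover have "prog_subst N P \<noteq> []"
    using assms(2) length_prog_subst[of N P] by (auto simp: wf_prog_def)
  moreover have "on_grid \<sigma> W (prog_subst N P)"
    using assms(2,3) by (intro on_grid_subst) (auto simp: wf_prog_def)
  moreover have "refs_bounded (prog_subst N P)"
    using assms(1,2) by (intro refs_bounded_subst) (auto simp: wf_prog_def)
  ultimately show ?thesis by (simp add: wf_prog_def)
qed


section \<open>Networks as programs\<close>

definition affine_gate :: "(nat \<Rightarrow> 'l \<Rightarrow> real) \<Rightarrow> (nat \<Rightarrow> real) \<Rightarrow> 'l list \<Rightarrow> nat \<Rightarrow> 'l gate" where
  "affine_gate A b js i = (b i, map (\<lambda>j. (A i j, Inp j)) (filter (\<lambda>j. A i j \<noteq> 0) js))"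

lemma reads_inputs_affine_gate: "reads_inputs (affine_gate A b js i)"
  by (auto simp: reads_inputs_def affine_gate_def)

lemma gate_val_affine_gate:
  assumes "distinct js"
  shows "gate_val \<rho> x vs (affine_gate A b js i) = (\<Sum>j\<in>set js. A i j * x j) + b i"
proof -
  have "(\<Sum>(a, r)\<leftarrow>snd (affine_gate A b js i). a * src_val \<rho> x vs r)
        = (\<Sum>j\<leftarrow>filter (\<lambda>j. A i j \<noteq> 0) js. A i j * x j)"
    by (simp add: affine_gate_def comp_def)
  also have "\<dots> = (\<Sum>j\<leftarrow>js. A i j * x j)"
    by (induction js) auto
  also have "\<dots> = (\<Sum>j\<in>set js. A i j * x j)"
    using assms by (simp add: sum_list_distinct_conv_sum_set)
  finally show ?thesis by (simp add: gate_val_def affine_gate_def)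
qed

lemma prog_inputs_affine_gate: "prog_inputs [affine_gate A b js i] = {j \<in> set js. A i j \<noteq> 0}"
  by (auto simp: prog_inputs_def affine_gate_def)

lemma length_affine_gate:
  "distinct js \<Longrightarrow> length (snd (affine_gate A b js i)) = card {j \<in> set js. A i j \<noteq> 0}"
  by (simp add: affine_gate_def distinct_length_filter Collect_conj_eq Int_commute)

lemma on_grid_affine_gate:
  "qgrid \<sigma> W (b i) \<Longrightarrow> \<forall>j\<in>set js. qgrid \<sigma> W (A i j) \<Longrightarrow> on_grid \<sigma> W [affine_gate A b js i]"
  by (auto simp: on_grid_def affine_gate_def)

lemma wf_prog_affine_gate:
  assumes "distinct js" "qgrid \<sigma> W (b i)" "\<forall>j\<in>set js. qgrid \<sigma> W (A i j)"
  shows "wf_prog \<sigma> W [affine_gate A b js i]"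
proof -
  have "prog_edges [affine_gate A b js i] = card (prog_inputs [affine_gate A b js i])"
    using assms(1) by (simp add: prog_edges_def length_affine_gate prog_inputs_affine_gate)
  moreover have "refs_bounded [affine_gate A b js i]"
    using reads_inputs_affine_gate[of A b js i] by (auto simp: refs_bounded_def reads_inputs_def)
  ultimately show ?thesis
    using on_grid_affine_gate[of \<sigma> W b i js A] assms(2,3) by (simp add: wf_prog_def)
qed

lemma sum_card_nonzero_le:
  fixes m :: nat and A :: "nat \<Rightarrow> 'l \<Rightarrow> real"
  assumes "I \<subseteq> {..<m}" "finite J"
  shows "(\<Sum>i\<in>I. card {j \<in> J. A i j \<noteq> 0}) \<le> card {(i, j). i < m \<and> j \<in> J \<and> A i j \<noteq> 0}"
proof -
  have "finite I" by (rule finite_subset[OF assms(1)]) simp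
  then have "(\<Sum>i\<in>I. card {j \<in> J. A i j \<noteq> 0}) = card (SIGMA i:I. {j \<in> J. A i j \<noteq> 0})"
    by (rule card_SigmaI[symmetric]) (use assms(2) in auto)
  also have "\<dots> \<le> card {(i, j). i < m \<and> j \<in> J \<and> A i j \<noteq> 0}"
  proof (rule card_mono)
    show "finite {(i, j). i < m \<and> j \<in> J \<and> A i j \<noteq> 0}"
      by (rule finite_subset[of _ "{..<m} \<times> J"]) (use assms(2) in auto)
    show "(SIGMA i:I. {j \<in> J. A i j \<noteq> 0}) \<subseteq> {(i, j). i < m \<and> j \<in> J \<and> A i j \<noteq> 0}"
      using assms(1) by auto
  qed
  finally show ?thesis .
qed

lemma prog_subst_affine_layer:
  fixes A :: "nat \<Rightarrow> 'l \<Rightarrow> real" and m :: nat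
  assumes js: "distinct js" and P: "wf_prog \<sigma> W P" "prog_inputs P \<subseteq> {..<m}"
    and grid: "\<forall>i<m. (\<forall>j\<in>set js. qgrid \<sigma> W (A i j)) \<and> qgrid \<sigma> W (b i)"
  defines "P' \<equiv> prog_subst (affine_gate A b js) P"
  shows "wf_prog \<sigma> W P'"
    and "prog_edges P' \<le> card {(i, j). i < m \<and> j \<in> set js \<and> A i j \<noteq> 0} + prog_edges P"
    and "prog_inputs P' \<subseteq> set js"
    and "prog_eval \<rho> x P' = prog_eval \<rho> (\<lambda>i. \<rho> ((\<Sum>j\<in>set js. A i j * x j) + b i)) P"
proof -
  show "wf_prog \<sigma> W P'"
    unfolding P'_def using P grid
    by (intro wf_prog_subst reads_inputs_affine_gate ballI on_grid_affine_gate) auto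
  show "prog_edges P' \<le> card {(i, j). i < m \<and> j \<in> set js \<and> A i j \<noteq> 0} + prog_edges P"
    unfolding P'_def prog_edges_subst
    using sum_card_nonzero_le[OF P(2), of "set js" A] by (simp add: length_affine_gate js)
  show "prog_inputs P' \<subseteq> set js"
    unfolding P'_def prog_inputs_subst by (auto simp: prog_inputs_affine_gate)
  show "prog_eval \<rho> x P' = prog_eval \<rho> (\<lambda>i. \<rho> ((\<Sum>j\<in>set js. A i j * x j) + b i)) P"
    unfolding P'_def using P(1) js
    by (simp add: prog_eval_subst reads_inputs_affine_gate gate_val_affine_gate wf_prog_def)
qed

lemma rt_as_prog:
  assumes "length ms = length Ls" "Ls \<noteq> []" "qt \<sigma> W n ms Ls" "0 < last ms"
  shows "\<exists>P. wf_prog \<sigma> W P \<and> prog_edges P \<le> wt n ms Ls \<and> prog_inputs P \<subseteq> {..<n} \<and>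
             (\<forall>z. rt \<rho> n z ms Ls 0 = prog_eval \<rho> (\<lambda>j. \<rho> (z j)) P)"
  using assms
proof (induction Ls arbitrary: n ms)
  case (Cons Ab Ls)
  obtain A b where Ab: "Ab = (A, b)" by (cases Ab)
  obtain m ms' where ms: "ms = m # ms'" using Cons.prems(1) by (cases ms) auto
  have grid: "\<forall>i<m. (\<forall>j\<in>set [0..<n]. qgrid \<sigma> W (A i j)) \<and> qgrid \<sigma> W (b i)"
    and qt: "qt \<sigma> W m ms' Ls"
    using Cons.prems(3) by (simp_all add: Ab ms)
  have wt: "wt n ms (Ab # Ls) = card {(i, j). i < m \<and> j \<in> set [0..<n] \<and> A i j \<noteq> 0}
                                + card {i. i < m \<and> b i \<noteq> 0} + wt m ms' Ls"
    by (simp add: Ab ms)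
  show ?case
  proof (cases "Ls = []")
    case True
    then have "ms' = []" and "0 < m" using Cons.prems(1,4) ms by auto
    define P where "P = [affine_gate A b [0..<n] 0]"
    have "wf_prog \<sigma> W P" using grid \<open>0 < m\<close> unfolding P_def by (intro wf_prog_affine_gate) auto
    moreover have "prog_edges P \<le> wt n ms (Ab # Ls)"
      using sum_card_nonzero_le[of "{0}" m "set [0..<n]" A] \<open>0 < m\<close>
      by (simp add: wt P_def prog_edges_def length_affine_gate del: set_upt)
    moreover have "prog_inputs P \<subseteq> {..<n}" by (auto simp: P_def prog_inputs_affine_gate)
    moreover have "rt \<rho> n z ms (Ab # Ls) 0 = prog_eval \<rho> (\<lambda>j. \<rho> (z j)) P" for z
      by (simp add: Ab ms \<open>ms' = []\<close> True P_def prog_eval_def gate_val_affine_gate atLeast0LessThan)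
    ultimately show ?thesis by blast
  next
    case False
    have "0 < last ms'" using Cons.prems(1,4) ms False by (cases ms') auto
    then obtain P where P: "wf_prog \<sigma> W P" "prog_edges P \<le> wt m ms' Ls" "prog_inputs P \<subseteq> {..<m}"
      "\<forall>z. rt \<rho> m z ms' Ls 0 = prog_eval \<rho> (\<lambda>j. \<rho> (z j)) P"
      using Cons.IH[of ms' m] Cons.prems(1) ms False qt by auto
    note layer = prog_subst_affine_layer[OF distinct_upt P(1,3) grid]
    have "rt \<rho> n z ms (Ab # Ls) 0 = prog_eval \<rho> (\<lambda>j. \<rho> (z j)) (prog_subst (affine_gate A b [0..<n]) P)"
      for z using P(4) by (simp add: layer(4) Ab ms atLeast0LessThan)
    moreover have "prog_inputs (prog_subst (affine_gate A b [0..<n]) P) \<subseteq> {..<n}"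
      using layer(3) by auto
    ultimately show ?thesis
      using layer(1,2) P(2) wt by (intro exI[of _ "prog_subst (affine_gate A b [0..<n]) P"]) auto
  qed
qed simp

lemma realize_as_prog:
  fixes \<Phi> :: "('d::finite) network"
  assumes "nn_valid \<Phi>" "d_out \<Phi> = 1" "quantized \<sigma> W \<Phi>" "nweights \<Phi> \<le> W"
  shows "\<exists>P. wf_prog \<sigma> W P \<and> prog_edges P \<le> W \<and> realize \<rho> \<Phi> = (\<lambda>x. prog_eval \<rho> (($) x) P)"
proof -
  obtain Ns A b Ls where \<Phi>: "\<Phi> = (Ns, (A, b), Ls)" by (cases \<Phi>) auto
  obtain h ms where Ns: "Ns = h # ms" and len: "length ms = length Ls"
    using assms(1) by (cases Ns) (auto simp: nn_valid_def \<Phi>)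
  obtain js :: "'d list" where js: "set js = UNIV" "distinct js"
    using finite_distinct_list[of "UNIV :: 'd set"] by auto
  have last: "last Ns = 1" using assms(2) by (simp add: d_out_def \<Phi>)
  have grid: "\<forall>i<h. (\<forall>j\<in>set js. qgrid \<sigma> W (A i j)) \<and> qgrid \<sigma> W (b i)"
    and qt: "qt \<sigma> W h ms Ls"
    using assms(3) by (simp_all add: quantized_def \<Phi> Ns)
  have nw: "card {(i, j). i < h \<and> j \<in> set js \<and> A i j \<noteq> 0} + wt h ms Ls \<le> W"
    using assms(4) by (simp add: nweights_def \<Phi> Ns js)
  have realize: "realize \<rho> \<Phi> x = rt \<rho> h (\<lambda>i. (\<Sum>j\<in>set js. A i j * x $ j) + b i) ms Ls 0" for x
    by (simp add: realize_def \<Phi> Ns js)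
  show ?thesis
  proof (cases "Ls = []")
    case True
    then have "h = 1" using len last Ns by simp
    define P where "P = [affine_gate A b js 0]"
    have "wf_prog \<sigma> W P" using grid \<open>h = 1\<close> js unfolding P_def by (intro wf_prog_affine_gate) auto
    moreover have "prog_edges P \<le> W"
      using sum_card_nonzero_le[of "{0}" h "set js" A] \<open>h = 1\<close> nw js(2)
      by (simp add: P_def prog_edges_def length_affine_gate)
    moreover have "realize \<rho> \<Phi> x = prog_eval \<rho> (($) x) P" for x
      using len True js(2) by (simp add: realize P_def prog_eval_def gate_val_affine_gate)
    ultimately show ?thesis by blast
  next
    case False
    have "0 < last ms" using False len last Ns by (cases ms) auto
    then obtain P where P: "wf_prog \<sigma> W P" "prog_edges P \<le> wt h ms Ls" "prog_inputs P \<subseteq> {..<h}"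
      "\<forall>z. rt \<rho> h z ms Ls 0 = prog_eval \<rho> (\<lambda>j. \<rho> (z j)) P"
      using rt_as_prog[OF len False qt] by blast
    note layer = prog_subst_affine_layer[OF js(2) P(1,3) grid]
    have "realize \<rho> \<Phi> x = prog_eval \<rho> (($) x) (prog_subst (affine_gate A b js) P)" for x
      using P(4) by (simp add: realize layer(4))
    moreover have "prog_edges (prog_subst (affine_gate A b js) P) \<le> W"
      using layer(2) P(2) nw by linarith
    ultimately show ?thesis using layer(1) by blast
  qed
qed


section \<open>Counting realizations\<close>

definition prog_tokens :: "'l gate list \<Rightarrow> (real \<times> 'l src option) list" where
  "prog_tokens P = concat (map (\<lambda>(b, es). (b, None) # map (\<lambda>(a, r). (a, Some r)) es) P)"

function prog_of_tokens :: "(real \<times> 'l src option) list \<Rightarrow> 'l gate list" where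
  "prog_of_tokens [] = []"
| "prog_of_tokens ((b, None) # ts) =
     (b, map (\<lambda>(a, r). (a, the r)) (takeWhile (\<lambda>t. snd t \<noteq> None) ts))
     # prog_of_tokens (dropWhile (\<lambda>t. snd t \<noteq> None) ts)"
| "prog_of_tokens ((a, Some r) # ts) = []"
  by pat_completeness auto
termination
  by (relation "Wellfounded.measure length") (auto simp: le_imp_less_Suc length_dropWhile_le)

lemma prog_tokens_Cons:
  "prog_tokens ((b, es) # P) = (b, None) # map (\<lambda>(a, r). (a, Some r)) es @ prog_tokens P"
  by (simp add: prog_tokens_def)

lemma prog_of_tokens_prog_tokens: "prog_of_tokens (prog_tokens P) = P"
proof (induction P)
  case Nil
  then show ?case by (simp add: prog_tokens_def)
next
  case (Cons g P)
  obtain b es where g: "g = (b, es)" by (cases g)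
  define ets where "ets = map (\<lambda>(a, r). (a, Some r)) es"
  have "\<forall>t\<in>set ets. snd t \<noteq> None" by (auto simp: ets_def)
  moreover have "takeWhile (\<lambda>t. snd t \<noteq> None) (prog_tokens P) = []"
    and "dropWhile (\<lambda>t. snd t \<noteq> None) (prog_tokens P) = prog_tokens P"
    by (cases P; auto simp: prog_tokens_def)+
  ultimately have "takeWhile (\<lambda>t. snd t \<noteq> None) (ets @ prog_tokens P) = ets"
    and "dropWhile (\<lambda>t. snd t \<noteq> None) (ets @ prog_tokens P) = prog_tokens P"
    by (simp_all add: takeWhile_append2 dropWhile_append2)
  moreover have "map (\<lambda>(a, r). (a, the r)) ets = es"
    unfolding ets_def by (induction es) auto
  ultimately show ?case
    using Cons.IH by (simp add: g prog_tokens_Cons flip: ets_def)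
qed

lemma length_prog_tokens: "length (prog_tokens P) = length P + prog_edges P"
  by (induction P) (auto simp: prog_tokens_def prog_edges_def)

lemma set_prog_tokens_subset:
  assumes "on_grid \<sigma> W P" "refs_bounded P"
  shows "set (prog_tokens P) \<subseteq> {x. qgrid \<sigma> W x} \<times> insert None (Some ` (range Inp \<union> Ref ` {..<length P}))"
proof
  have tokens: "set (prog_tokens P) = (\<Union>(b, es)\<in>set P. insert (b, None) ((\<lambda>(a, r). (a, Some r)) ` set es))"
    by (induction P) (auto simp: prog_tokens_def split: prod.splits)
  fix t assume "t \<in> set (prog_tokens P)"
  then obtain b es where g: "(b, es) \<in> set P"
    and t: "t = (b, None) \<or> (\<exists>a r. (a, r) \<in> set es \<and> t = (a, Some r))"
    unfolding tokens by auto
  have "qgrid \<sigma> W b" using assms(1) g by (auto simp: on_grid_def)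
  moreover have "qgrid \<sigma> W a \<and> r \<in> range Inp \<union> Ref ` {..<length P}" if "(a, r) \<in> set es" for a r
    using assms g that by (cases r) (fastforce simp: on_grid_def refs_bounded_def)+
  ultimately show "t \<in> {x. qgrid \<sigma> W x} \<times> insert None (Some ` (range Inp \<union> Ref ` {..<length P}))"
    using t by auto
qed

lemma sum_powers_le_Suc_power: "(\<Sum>i\<le>n. (c::nat) ^ i) \<le> (c + 1) ^ n"
proof (induction n)
  case (Suc n)
  have "(\<Sum>i\<le>Suc n. c ^ i) = (\<Sum>i\<le>n. c ^ i) + c * c ^ n" by simp
  also have "\<dots> \<le> (c + 1) ^ n + c * (c + 1) ^ n"
    using Suc.IH by (intro add_mono mult_left_mono power_mono) auto
  also have "\<dots> = (c + 1) ^ Suc n" by simp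
  finally show ?case .
qed simp

lemma wf_progs_subset_decoded_tokens:
  "{P :: 'l gate list. wf_prog \<sigma> W P \<and> prog_edges P \<le> W}
   \<subseteq> prog_of_tokens ` {ts. set ts \<subseteq> {x. qgrid \<sigma> W x} \<times> insert None (Some ` (range Inp \<union> Ref ` {..<W + 1}))
                            \<and> length ts \<le> 2 * W + 1}"
proof clarify
  fix P :: "'l gate list" assume P: "wf_prog \<sigma> W P" "prog_edges P \<le> W"
  then have "length P \<le> W + 1" by (auto simp: wf_prog_def)
  then have "set (prog_tokens P) \<subseteq> {x. qgrid \<sigma> W x} \<times> insert None (Some ` (range Inp \<union> Ref ` {..<W + 1}))"
    using set_prog_tokens_subset[of \<sigma> W P] P(1) by (force simp: wf_prog_def)
  moreover have "length (prog_tokens P) \<le> 2 * W + 1"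
    using P \<open>length P \<le> W + 1\<close> by (simp add: length_prog_tokens)
  ultimately show "P \<in> prog_of_tokens ` {ts. set ts \<subseteq> {x. qgrid \<sigma> W x} \<times> insert None (Some ` (range Inp \<union> Ref ` {..<W + 1}))
                                          \<and> length ts \<le> 2 * W + 1}"
    by (metis (mono_tags, lifting) image_eqI mem_Collect_eq prog_of_tokens_prog_tokens)
qed

lemma card_wf_progs_le:
  fixes \<sigma> W :: nat
  assumes "finite {x. qgrid \<sigma> W x}"
  defines "Progs \<equiv> {P :: ('l::finite) gate list. wf_prog \<sigma> W P \<and> prog_edges P \<le> W}"
  shows "finite Progs"
    and "card Progs \<le> (card {x. qgrid \<sigma> W x} * (CARD('l) + W + 2) + 1) ^ (2 * W + 1)"
proof -
  define G where "G = {x. qgrid \<sigma> W x}"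
  define R where "R = (insert None (Some ` (range Inp \<union> Ref ` {..<W + 1})) :: 'l src option set)"
  define Ts where "Ts = {ts. set ts \<subseteq> G \<times> R \<and> length ts \<le> 2 * W + 1}"
  have fin: "finite (G \<times> R)" using assms(1) by (simp add: G_def R_def)
  have "card (range (Inp :: 'l \<Rightarrow> 'l src)) \<le> CARD('l)" by (rule card_image_le) simp
  moreover have "card (Ref ` {..<W + 1} :: 'l src set) \<le> W + 1"
    using card_image_le[of "{..<W + 1}" Ref] by simp
  ultimately have "card (range Inp \<union> Ref ` {..<W + 1} :: 'l src set) \<le> CARD('l) + (W + 1)"
    using card_Un_le[of "range Inp" "Ref ` {..<W + 1} :: 'l src set"] by linarith
  then have "card R \<le> CARD('l) + W + 2"
    by (simp add: R_def card_insert_if card_image)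
  then have cardGR: "card (G \<times> R) \<le> card G * (CARD('l) + W + 2)"
    unfolding card_cartesian_product by (rule mult_left_mono) auto
  have sub: "Progs \<subseteq> prog_of_tokens ` Ts"
    unfolding Progs_def Ts_def G_def R_def by (rule wf_progs_subset_decoded_tokens)
  moreover have "finite Ts" unfolding Ts_def by (rule finite_lists_length_le[OF fin])
  ultimately show "finite Progs" by (meson finite_imageI finite_subset)
  have "card Progs \<le> card Ts"
    using card_mono[OF finite_imageI[OF \<open>finite Ts\<close>] sub] card_image_le[OF \<open>finite Ts\<close>, of prog_of_tokens]
    by linarith
  also have "\<dots> = (\<Sum>i\<le>2 * W + 1. card (G \<times> R) ^ i)"
    unfolding Ts_def by (rule card_lists_length_le[OF fin])
  also have "\<dots> \<le> (card (G \<times> R) + 1) ^ (2 * W + 1)" by (rule sum_powers_le_Suc_power)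
  also have "\<dots> \<le> (card G * (CARD('l) + W + 2) + 1) ^ (2 * W + 1)"
    using cardGR by (intro power_mono) auto
  finally show "card Progs \<le> (card {x. qgrid \<sigma> W x} * (CARD('l) + W + 2) + 1) ^ (2 * W + 1)"
    by (simp add: G_def)
qed

lemma le_two_pow_ceil_log: "0 < x \<Longrightarrow> x \<le> 2 ^ nat \<lceil>log 2 x\<rceil>"
proof -
  assume "0 < x"
  have "log 2 x \<le> real (nat \<lceil>log 2 x\<rceil>)" by linarith
  then have "x \<le> 2 powr real (nat \<lceil>log 2 x\<rceil>)" using \<open>0 < x\<close> by (simp add: log_le_iff)
  then show ?thesis by (simp add: powr_realpow)
qed

lemma qgrid_subset_dyadic:
  fixes \<sigma> W :: nat
  assumes "W \<ge> 1"
  defines "k \<equiv> nat \<lceil>log 2 (real W)\<rceil>"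
  shows "{x. qgrid \<sigma> W x} \<subseteq> (\<lambda>m. of_int m / 2 ^ (\<sigma> * k\<^sup>2)) ` {- (2 ^ (2 * \<sigma> * k\<^sup>2)) .. 2 ^ (2 * \<sigma> * k\<^sup>2)}"
proof
  have Wk: "real W \<le> 2 ^ k" unfolding k_def using assms by (intro le_two_pow_ceil_log) simp
  fix x assume "x \<in> {x. qgrid \<sigma> W x}"
  then have x: "\<bar>x\<bar> \<le> real W ^ (\<sigma> * k)" "x * 2 ^ (\<sigma> * k\<^sup>2) \<in> \<int>"
    by (simp_all add: qgrid_def k_def Let_def)
  then obtain m where m: "x * 2 ^ (\<sigma> * k\<^sup>2) = of_int m" by (auto elim: Ints_cases)
  have "\<bar>of_int m\<bar> = \<bar>x\<bar> * 2 ^ (\<sigma> * k\<^sup>2)" by (simp flip: m add: abs_mult)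
  also have "\<dots> \<le> (2 ^ k) ^ (\<sigma> * k) * 2 ^ (\<sigma> * k\<^sup>2)"
  proof (rule mult_right_mono)
    have "real W ^ (\<sigma> * k) \<le> (2 ^ k) ^ (\<sigma> * k)" using Wk by (intro power_mono) auto
    then show "\<bar>x\<bar> \<le> (2 ^ k) ^ (\<sigma> * k)" using x(1) by linarith
  qed simp
  also have "\<dots> = 2 ^ (2 * \<sigma> * k\<^sup>2)"
    by (simp add: power_mult[symmetric] power_add[symmetric] power2_eq_square algebra_simps)
  finally have "of_int \<bar>m\<bar> \<le> (of_int (2 ^ (2 * \<sigma> * k\<^sup>2)) :: real)" by simp
  then have "\<bar>m\<bar> \<le> 2 ^ (2 * \<sigma> * k\<^sup>2)" by (simp only: of_int_le_iff)
  then have "m \<in> {- (2 ^ (2 * \<sigma> * k\<^sup>2)) .. 2 ^ (2 * \<sigma> * k\<^sup>2)}" by auto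
  moreover have "x = of_int m / 2 ^ (\<sigma> * k\<^sup>2)" using m by (simp add: field_simps)
  ultimately show "x \<in> (\<lambda>m. of_int m / 2 ^ (\<sigma> * k\<^sup>2)) ` {- (2 ^ (2 * \<sigma> * k\<^sup>2)) .. 2 ^ (2 * \<sigma> * k\<^sup>2)}"
    by blast
qed

lemma card_qgrid_le:
  fixes \<sigma> W :: nat
  assumes "W \<ge> 1"
  shows "finite {x. qgrid \<sigma> W x}"
    and "card {x. qgrid \<sigma> W x} \<le> 2 ^ (2 * \<sigma> * (nat \<lceil>log 2 (1 + real W)\<rceil>)\<^sup>2 + 2)"
proof -
  define k where "k = nat \<lceil>log 2 (real W)\<rceil>"
  define M :: int where "M = 2 ^ (2 * \<sigma> * k\<^sup>2)"
  have sub: "{x. qgrid \<sigma> W x} \<subseteq> (\<lambda>m. of_int m / 2 ^ (\<sigma> * k\<^sup>2)) ` {-M..M}"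
    unfolding M_def k_def by (rule qgrid_subset_dyadic[OF assms])
  then show "finite {x. qgrid \<sigma> W x}" by (rule finite_subset) simp
  have "card {x. qgrid \<sigma> W x} \<le> card {-M..M}"
    using card_mono[OF _ sub] card_image_le[of "{-M..M}"] by (meson finite_atLeastAtMost_int finite_imageI order_trans)
  also have "\<dots> \<le> nat (4 * M)"
  proof -
    have "1 \<le> M" by (simp add: M_def)
    then show ?thesis by simp
  qed
  also have "\<dots> = 2 ^ (2 * \<sigma> * k\<^sup>2 + 2)"
    by (simp add: M_def nat_mult_distrib nat_power_eq power_add)
  also have "\<dots> \<le> 2 ^ (2 * \<sigma> * (nat \<lceil>log 2 (1 + real W)\<rceil>)\<^sup>2 + 2)"
  proof (rule power_increasing)
    have "k \<le> nat \<lceil>log 2 (1 + real W)\<rceil>"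
      unfolding k_def using assms by (intro nat_mono ceiling_mono) simp
    then show "2 * \<sigma> * k\<^sup>2 + 2 \<le> 2 * \<sigma> * (nat \<lceil>log 2 (1 + real W)\<rceil>)\<^sup>2 + 2"
      by (simp add: power_mono)
  qed simp
  finally show "card {x. qgrid \<sigma> W x} \<le> 2 ^ (2 * \<sigma> * (nat \<lceil>log 2 (1 + real W)\<rceil>)\<^sup>2 + 2)" .
qed

definition nn_count_const :: "nat \<Rightarrow> nat \<Rightarrow> nat" where
  "nn_count_const \<sigma> D = 3 * (2 * \<sigma> + D + 5)"

lemma token_strings_bound_le_pow:
  fixes \<sigma> D W :: nat
  assumes "W \<ge> 1"
  defines "K \<equiv> nat \<lceil>log 2 (1 + real W)\<rceil>"
  shows "(2 ^ (2 * \<sigma> * K\<^sup>2 + 2) * (D + W + 2) + 1) ^ (2 * W + 1) \<le> 2 ^ (nn_count_const \<sigma> D * W * K\<^sup>2)"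
proof -
  define E where "E = 2 * \<sigma> + D + 5"
  have "1 \<le> log 2 (1 + real W)" using assms by simp
  then have K: "1 \<le> K" unfolding K_def by linarith
  have "real (W + 1) \<le> 2 ^ K" unfolding K_def by (rule order_trans[OF _ le_two_pow_ceil_log]) auto
  then have WK: "W + 1 \<le> 2 ^ K" by (metis of_nat_le_iff of_nat_numeral of_nat_power)
  have "D + W + 3 \<le> (D + 2) * (W + 1)" using assms by (simp add: algebra_simps)
  also have "\<dots> \<le> 2 ^ (D + 2) * 2 ^ K" by (intro mult_le_mono less_imp_le[OF less_exp] WK)
  finally have DWK: "D + W + 3 \<le> 2 ^ (D + 2) * 2 ^ K" .
  have "2 ^ (2 * \<sigma> * K\<^sup>2 + 2) * (D + W + 2) + 1 \<le> 2 ^ (2 * \<sigma> * K\<^sup>2 + 2) * (D + W + 3)"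
    using one_le_power[of "2::nat" "2 * \<sigma> * K\<^sup>2 + 2"] by (simp add: algebra_simps)
  also have "\<dots> \<le> 2 ^ (2 * \<sigma> * K\<^sup>2 + 2) * (2 ^ (D + 2) * 2 ^ K)"
    using DWK by (rule mult_left_mono) simp
  also have "\<dots> = 2 ^ (2 * \<sigma> * K\<^sup>2 + 2 + (D + 2 + K))" by (simp only: power_add)
  also have "\<dots> \<le> 2 ^ (E * K\<^sup>2)"
  proof (rule power_increasing)
    have "K \<le> K\<^sup>2" "D + 4 \<le> (D + 4) * K\<^sup>2" using K by (simp_all add: power2_eq_square)
    then show "2 * \<sigma> * K\<^sup>2 + 2 + (D + 2 + K) \<le> E * K\<^sup>2" by (simp add: E_def algebra_simps)
  qed simp
  finally have "(2 ^ (2 * \<sigma> * K\<^sup>2 + 2) * (D + W + 2) + 1) ^ (2 * W + 1) \<le> (2 ^ (E * K\<^sup>2)) ^ (2 * W + 1)"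
    by (rule power_mono) simp
  also have "\<dots> = 2 ^ (E * K\<^sup>2 * (2 * W + 1))" by (rule power_mult[symmetric])
  also have "\<dots> \<le> 2 ^ (nn_count_const \<sigma> D * W * K\<^sup>2)"
  proof (rule power_increasing)
    have "E * K\<^sup>2 * (2 * W + 1) \<le> E * K\<^sup>2 * (3 * W)" using assms by (intro mult_left_mono) auto
    then show "E * K\<^sup>2 * (2 * W + 1) \<le> nn_count_const \<sigma> D * W * K\<^sup>2"
      by (simp add: nn_count_const_def E_def algebra_simps)
  qed simp
  finally show ?thesis .
qed

lemma card_NNset_le:
  fixes \<sigma> W :: nat
  assumes "W \<ge> 1"
  shows "finite (NNset \<rho> \<sigma> W :: (real^'d::finite \<Rightarrow> real) set)"
    and "card (NNset \<rho> \<sigma> W :: (real^'d \<Rightarrow> real) set)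
         \<le> 2 ^ (nn_count_const \<sigma> CARD('d) * W * (nat \<lceil>log 2 (1 + real W)\<rceil>)\<^sup>2)"
proof -
  define Progs where "Progs = {P :: 'd gate list. wf_prog \<sigma> W P \<and> prog_edges P \<le> W}"
  have sub: "(NNset \<rho> \<sigma> W :: (real^'d \<Rightarrow> real) set) \<subseteq> (\<lambda>P x. prog_eval \<rho> (($) x) P) ` Progs"
  proof
    fix f :: "real^'d \<Rightarrow> real" assume "f \<in> NNset \<rho> \<sigma> W"
    then obtain \<Phi> :: "'d network" where "f = realize \<rho> \<Phi>" "nn_valid \<Phi>" "d_out \<Phi> = 1"
      "quantized \<sigma> W \<Phi>" "nweights \<Phi> \<le> W"
      by (auto simp: NNset_def)
    then show "f \<in> (\<lambda>P x. prog_eval \<rho> (($) x) P) ` Progs"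
      using realize_as_prog[of \<Phi> \<sigma> W \<rho>] by (auto simp: Progs_def)
  qed
  note grid = card_qgrid_le[OF assms, of \<sigma>]
  note progs = card_wf_progs_le[OF grid(1), where 'l = 'd, folded Progs_def]
  show "finite (NNset \<rho> \<sigma> W :: (real^'d \<Rightarrow> real) set)"
    using finite_subset[OF sub finite_imageI[OF progs(1)]] .
  have "card (NNset \<rho> \<sigma> W :: (real^'d \<Rightarrow> real) set) \<le> card Progs"
    using card_mono[OF finite_imageI[OF progs(1)] sub]
      card_image_le[OF progs(1), of "\<lambda>P x. prog_eval \<rho> (($) x) P"] by linarith
  also have "\<dots> \<le> (card {x. qgrid \<sigma> W x} * (CARD('d) + W + 2) + 1) ^ (2 * W + 1)"
    by (rule progs(2))
  also have "\<dots> \<le> (2 ^ (2 * \<sigma> * (nat \<lceil>log 2 (1 + real W)\<rceil>)\<^sup>2 + 2) * (CARD('d) + W + 2) + 1) ^ (2 * W + 1)"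
    using grid(2) by (intro power_mono add_mono mult_right_mono) auto
  also have "\<dots> \<le> 2 ^ (nn_count_const \<sigma> CARD('d) * W * (nat \<lceil>log 2 (1 + real W)\<rceil>)\<^sup>2)"
    by (rule token_strings_bound_le_pow[OF assms])
  finally show "card (NNset \<rho> \<sigma> W :: (real^'d \<Rightarrow> real) set)
      \<le> 2 ^ (nn_count_const \<sigma> CARD('d) * W * (nat \<lceil>log 2 (1 + real W)\<rceil>)\<^sup>2)" .
qed


section \<open>Measure of the approximable sets\<close>

lemma borel_measurable_rt:
  assumes "\<rho> \<in> borel_measurable borel" "\<And>j. (\<lambda>x. z x j) \<in> borel_measurable M"
  shows "(\<lambda>x. rt \<rho> n (z x) ms Ls i) \<in> borel_measurable M"
  using assms(2)
proof (induction Ls arbitrary: n z ms i)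
  case (Cons Ab Ls)
  obtain A b where Ab: "Ab = (A, b)" by (cases Ab)
  show ?case
  proof (cases ms)
    case (Cons m ms')
    have "(\<lambda>x. \<rho> (z x j)) \<in> borel_measurable M" for j
      using measurable_compose[OF Cons.prems assms(1)] .
    then have "(\<lambda>x. (\<Sum>j<n. A i j * \<rho> (z x j)) + b i) \<in> borel_measurable M" for i
      by measurable
    from Cons.IH[OF this] show ?thesis by (simp add: Ab Cons)
  qed (use Cons.prems in simp)
qed (cases ms; use assms in simp)

lemma borel_measurable_realize:
  assumes "\<rho> \<in> borel_measurable borel"
  shows "realize \<rho> (\<Phi> :: ('d::finite) network) \<in> borel_measurable lborel"
proof -
  obtain Ns A b Ls where \<Phi>: "\<Phi> = (Ns, (A, b), Ls)" by (cases \<Phi>) auto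
  have "(\<lambda>x::real^'d. x $ j) \<in> borel_measurable borel" for j
    by (intro borel_measurable_continuous_onI continuous_intros)
  then have "(\<lambda>x::real^'d. (\<Sum>j\<in>UNIV. A i j * x $ j) + b i) \<in> borel_measurable borel" for i
    by measurable
  from borel_measurable_rt[where z = "\<lambda>x i. (\<Sum>j\<in>UNIV. A i j * x $ j) + b i", OF assms this]
  have "(\<lambda>x. rt \<rho> (hd Ns) (\<lambda>i. (\<Sum>j\<in>UNIV. A i j * x $ j) + b i) (tl Ns) Ls 0) \<in> borel_measurable borel" .
  moreover have "realize \<rho> \<Phi> = (\<lambda>x. rt \<rho> (hd Ns) (\<lambda>i. (\<Sum>j\<in>UNIV. A i j * x $ j) + b i) (tl Ns) Ls 0)"
    by (simp add: realize_def \<Phi> fun_eq_iff)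
  ultimately show ?thesis by simp
qed

lemma l2ball_center_in_L2set:
  assumes g: "g \<in> borel_measurable lborel" and \<Omega>: "\<Omega> \<in> sets lborel" and f: "f \<in> l2ball \<Omega> g \<epsilon>"
  shows "g \<in> L2set \<Omega>"
proof -
  have fm: "f \<in> borel_measurable lborel"
    and fi: "(\<integral>\<^sup>+ x\<in>\<Omega>. ennreal ((f x)\<^sup>2) \<partial>lborel) < \<infinity>"
    and di: "(\<integral>\<^sup>+ x\<in>\<Omega>. ennreal ((f x - g x)\<^sup>2) \<partial>lborel) \<le> ennreal (\<epsilon>\<^sup>2)"
    using f by (auto simp: l2ball_def L2set_def)
  have pointwise: "ennreal ((g x)\<^sup>2) \<le> 2 * ennreal ((f x)\<^sup>2) + 2 * ennreal ((f x - g x)\<^sup>2)" for x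
  proof -
    have "(g x)\<^sup>2 \<le> 2 * (f x)\<^sup>2 + 2 * (f x - g x)\<^sup>2"
      using zero_le_power2[of "2 * f x - g x"] by (simp add: power2_eq_square algebra_simps)
    then have "ennreal ((g x)\<^sup>2) \<le> ennreal (2 * (f x)\<^sup>2) + ennreal (2 * (f x - g x)\<^sup>2)"
      by (simp add: ennreal_leI del: ennreal_plus flip: ennreal_plus)
    then show ?thesis by (simp add: ennreal_mult')
  qed
  have "(\<integral>\<^sup>+ x\<in>\<Omega>. ennreal ((g x)\<^sup>2) \<partial>lborel)
        \<le> (\<integral>\<^sup>+ x. 2 * (ennreal ((f x)\<^sup>2) * indicator \<Omega> x)
                   + 2 * (ennreal ((f x - g x)\<^sup>2) * indicator \<Omega> x) \<partial>lborel)"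
    by (intro nn_integral_mono) (auto simp: indicator_def pointwise)
  also have "\<dots> = 2 * (\<integral>\<^sup>+ x\<in>\<Omega>. ennreal ((f x)\<^sup>2) \<partial>lborel)
                   + 2 * (\<integral>\<^sup>+ x\<in>\<Omega>. ennreal ((f x - g x)\<^sup>2) \<partial>lborel)"
    using fm g \<Omega> by (subst nn_integral_add) (auto simp: nn_integral_cmult)
  also have "\<dots> < \<infinity>"
    using fi le_less_trans[OF di ennreal_less_top] by (simp add: ennreal_mult_less_top)
  finally show ?thesis using g by (simp add: L2set_def)
qed

definition nn_approx_set ::
  "(real \<Rightarrow> real) \<Rightarrow> nat \<Rightarrow> (real^'d::finite) set \<Rightarrow> (real^'d \<Rightarrow> real) set \<Rightarrow> nat \<Rightarrow> real \<Rightarrow> (real^'d \<Rightarrow> real) set"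
  where "nn_approx_set \<rho> \<sigma> \<Omega> S W \<epsilon> = {f \<in> S. \<exists>g\<in>NNset \<rho> \<sigma> W. f \<in> l2ball \<Omega> g \<epsilon>}"

lemma nn_approx_set_eq_UN:
  assumes "critical_setting \<Omega> S P s_star" "\<rho> \<in> borel_measurable borel"
  shows "nn_approx_set \<rho> \<sigma> \<Omega> S W \<epsilon> = (\<Union>g\<in>NNset \<rho> \<sigma> W \<inter> L2set \<Omega>. S \<inter> l2ball \<Omega> g \<epsilon>)"
proof -
  have "\<Omega> \<in> sets lborel" using assms(1) by (simp add: critical_setting_def borel_open)
  moreover have "g \<in> borel_measurable lborel" if "g \<in> NNset \<rho> \<sigma> W" for g
    using that borel_measurable_realize[OF assms(2)] by (auto simp: NNset_def)
  ultimately have "g \<in> L2set \<Omega>" if "g \<in> NNset \<rho> \<sigma> W" "f \<in> l2ball \<Omega> g \<epsilon>" for f g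
    using that l2ball_center_in_L2set by blast
  then show ?thesis by (auto simp: nn_approx_set_def)
qed

lemma measure_nn_approx_set_le:
  fixes \<Omega> :: "(real^'d::finite) set"
  assumes crit: "critical_setting \<Omega> S P s_star" and \<rho>: "\<rho> \<in> borel_measurable borel"
    and "W \<ge> 1" "\<epsilon> > 0"
    and ball: "\<forall>g\<in>L2set \<Omega>. measure P (S \<inter> l2ball \<Omega> g \<epsilon>) \<le> 2 powr (- c * \<epsilon> powr (-1 / s))"
  shows "nn_approx_set \<rho> \<sigma> \<Omega> S W \<epsilon> \<in> sets P"
    and "measure P (nn_approx_set \<rho> \<sigma> \<Omega> S W \<epsilon>)
         \<le> 2 powr (real (nn_count_const \<sigma> CARD('d)) * real W * (real_of_int \<lceil>log 2 (1 + real W)\<rceil>)\<^sup>2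
                    - c * \<epsilon> powr (-1 / s))"
proof -
  define G where "G = NNset \<rho> \<sigma> W \<inter> L2set \<Omega>"
  define K where "K = nat \<lceil>log 2 (1 + real W)\<rceil>"
  note card = card_NNset_le[OF \<open>W \<ge> 1\<close>, of \<rho> \<sigma>, where 'd = 'd]
  have G: "finite G" "card G \<le> 2 ^ (nn_count_const \<sigma> CARD('d) * W * K\<^sup>2)"
    using card card_mono[OF card(1), of G] by (auto simp: G_def K_def)
  have balls: "S \<inter> l2ball \<Omega> g \<epsilon> \<in> sets P" if "g \<in> G" for g
  proof -
    have "sets P = sigma_sets S {S \<inter> l2ball \<Omega> g \<epsilon> | g \<epsilon>. g \<in> L2set \<Omega> \<and> \<epsilon> > 0}"
      using crit by (simp add: critical_setting_def)
    then show ?thesis using that \<open>\<epsilon> > 0\<close> by (auto simp: G_def)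
  qed
  have eq: "nn_approx_set \<rho> \<sigma> \<Omega> S W \<epsilon> = (\<Union>g\<in>G. S \<inter> l2ball \<Omega> g \<epsilon>)"
    unfolding G_def by (rule nn_approx_set_eq_UN[OF crit \<rho>])
  show "nn_approx_set \<rho> \<sigma> \<Omega> S W \<epsilon> \<in> sets P"
    unfolding eq using G(1) balls by blast
  have "measure P (nn_approx_set \<rho> \<sigma> \<Omega> S W \<epsilon>) \<le> (\<Sum>g\<in>G. measure P (S \<inter> l2ball \<Omega> g \<epsilon>))"
    unfolding eq by (rule measure_UNION_le[OF G(1) balls])
  also have "\<dots> \<le> real (card G) * 2 powr (- c * \<epsilon> powr (-1 / s))"
    using sum_mono[of G "\<lambda>g. measure P (S \<inter> l2ball \<Omega> g \<epsilon>)" "\<lambda>_. 2 powr (- c * \<epsilon> powr (-1 / s))"] ball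
    by (simp add: G_def)
  also have "\<dots> \<le> 2 ^ (nn_count_const \<sigma> CARD('d) * W * K\<^sup>2) * 2 powr (- c * \<epsilon> powr (-1 / s))"
    using G(2) by (intro mult_right_mono) (simp_all flip: of_nat_le_iff)
  also have "\<dots> = 2 powr (real (nn_count_const \<sigma> CARD('d)) * real W * (real_of_int \<lceil>log 2 (1 + real W)\<rceil>)\<^sup>2
                          - c * \<epsilon> powr (-1 / s))"
  proof -
    have "real K = real_of_int \<lceil>log 2 (1 + real W)\<rceil>" unfolding K_def by simp
    then show ?thesis by (simp add: powr_diff powr_realpow[symmetric] divide_inverse powr_minus)
  qed
  finally show "measure P (nn_approx_set \<rho> \<sigma> \<Omega> S W \<epsilon>)
    \<le> 2 powr (real (nn_count_const \<sigma> CARD('d)) * real W * (real_of_int \<lceil>log 2 (1 + real W)\<rceil>)\<^sup>2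
               - c * \<epsilon> powr (-1 / s))" .
qed

lemma outer_prob_le_measure: "B \<in> sets P \<Longrightarrow> A \<subseteq> B \<Longrightarrow> outer_prob P A \<le> measure P B"
  unfolding outer_prob_def by (rule cInf_lower) (auto intro: bdd_belowI[of _ 0])

lemma outer_prob_null_subset: "N \<in> null_sets P \<Longrightarrow> A \<subseteq> N \<Longrightarrow> outer_prob P A = 0"
proof -
  assume N: "N \<in> null_sets P" and "A \<subseteq> N"
  then have "outer_prob P A \<le> 0"
    using outer_prob_le_measure[of N P A] measure_eq_0_null_sets[OF N] by auto
  moreover have "0 \<le> outer_prob P A"
    unfolding outer_prob_def using N \<open>A \<subseteq> N\<close> by (intro cInf_greatest) auto
  ultimately show ?thesis by simp
qed

lemma outer_prob_nn_approx_le: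
  fixes \<Omega> :: "(real^'d::finite) set"
  assumes crit: "critical_setting \<Omega> S P s_star" and \<rho>: "\<rho> \<in> borel_measurable borel" and "s > s_star"
  shows "\<exists>c>0. \<exists>\<epsilon>0>0. \<forall>W::nat. \<forall>\<epsilon>. W \<ge> 1 \<and> 0 < \<epsilon> \<and> \<epsilon> < \<epsilon>0 \<longrightarrow>
           outer_prob P (nn_approx_set \<rho> \<sigma> \<Omega> S W \<epsilon>)
             \<le> 2 powr (real (nn_count_const \<sigma> CARD('d)) * real W * (real_of_int \<lceil>log 2 (1 + real W)\<rceil>)\<^sup>2
                        - c * \<epsilon> powr (-1 / s))"
proof -
  obtain c \<epsilon>0 where "c > 0" "\<epsilon>0 > 0" and ball: "\<forall>g\<in>L2set \<Omega>. \<forall>\<epsilon>. 0 < \<epsilon> \<and> \<epsilon> < \<epsilon>0 \<longrightarrow>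
      measure P (S \<inter> l2ball \<Omega> g \<epsilon>) \<le> 2 powr (- c * \<epsilon> powr (-1 / s))"
    using crit \<open>s > s_star\<close> unfolding critical_setting_def by blast
  have "outer_prob P (nn_approx_set \<rho> \<sigma> \<Omega> S W \<epsilon>)
          \<le> 2 powr (real (nn_count_const \<sigma> CARD('d)) * real W * (real_of_int \<lceil>log 2 (1 + real W)\<rceil>)\<^sup>2
                     - c * \<epsilon> powr (-1 / s))"
    if "W \<ge> 1" "0 < \<epsilon>" "\<epsilon> < \<epsilon>0" for W \<epsilon>
  proof -
    note bound = measure_nn_approx_set_le[OF crit \<rho> that(1,2), of c s \<sigma>]
    show ?thesis
      using ball that by (intro order_trans[OF outer_prob_le_measure bound(2)] bound(1)) auto
  qed
  then show ?thesis using \<open>c > 0\<close> \<open>\<epsilon>0 > 0\<close> by blast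
qed


section \<open>Functions approximable at a polynomial rate\<close>

lemma Weps_attained:
  assumes "Weps \<rho> \<sigma> \<Omega> \<epsilon> f \<noteq> \<infinity>"
  obtains W where "W \<ge> 1" "\<exists>g\<in>NNset \<rho> \<sigma> W. f \<in> l2ball \<Omega> g \<epsilon>" "Weps \<rho> \<sigma> \<Omega> \<epsilon> f = enat W"
proof -
  define X where "X = enat ` {W. W \<ge> 1 \<and> (\<exists>g\<in>NNset \<rho> \<sigma> W. f \<in> l2ball \<Omega> g \<epsilon>)}"
  have W: "Weps \<rho> \<sigma> \<Omega> \<epsilon> f = Inf X" by (simp add: Weps_def X_def)
  then have "X \<noteq> {}" using assms by (auto simp: Inf_enat_def)
  then have "Inf X \<in> X" unfolding Inf_enat_def by (auto intro: LeastI)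
  then show ?thesis using that unfolding W X_def by auto
qed

lemma null_set_cover_if_small_covers:
  assumes "finite_measure M" and small: "\<And>\<delta>. \<delta> > 0 \<Longrightarrow> \<exists>B\<in>sets M. A \<subseteq> B \<and> measure M B < \<delta>"
  shows "\<exists>N\<in>null_sets M. A \<subseteq> N"
proof -
  interpret finite_measure M by fact
  obtain B where B: "\<And>k. B k \<in> sets M \<and> A \<subseteq> B k \<and> measure M (B k) < inverse (real (Suc k))"
    using small[of "inverse (real (Suc _))"] by (metis inverse_positive_iff_positive of_nat_0_less_iff zero_less_Suc)
  define N where "N = (\<Inter>k. B k)"
  have N: "N \<in> sets M" "A \<subseteq> N" using B by (auto simp: N_def)
  have "measure M N \<le> inverse (real (Suc k))" for k
  proof -
    have "N \<subseteq> B k" by (auto simp: N_def)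
    then show ?thesis using finite_measure_mono[of N "B k"] B[of k] by linarith
  qed
  then have "measure M N \<le> 0"
    by (intro LIMSEQ_le_const[OF LIMSEQ_inverse_real_of_nat]) auto
  then have "N \<in> null_sets M"
    using N(1) measure_nonneg[of M N] by (auto simp: emeasure_eq_measure null_sets_def)
  then show ?thesis using N(2) by blast
qed

lemma measure_nn_approx_UN_le:
  fixes \<Omega> :: "(real^'d::finite) set" and \<sigma> :: nat
  assumes crit: "critical_setting \<Omega> S P s_star" and \<rho>: "\<rho> \<in> borel_measurable borel"
    and "0 < \<epsilon>" "0 \<le> X"
    and ball: "\<forall>g\<in>L2set \<Omega>. measure P (S \<inter> l2ball \<Omega> g \<epsilon>) \<le> 2 powr (- c * \<epsilon> powr (-1 / s))"
  defines "C \<equiv> real (nn_count_const \<sigma> CARD('d))"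
  shows "(\<Union>W\<in>{1..nat \<lfloor>X\<rfloor>}. nn_approx_set \<rho> \<sigma> \<Omega> S W \<epsilon>) \<in> sets P"
    and "measure P (\<Union>W\<in>{1..nat \<lfloor>X\<rfloor>}. nn_approx_set \<rho> \<sigma> \<Omega> S W \<epsilon>)
         \<le> X * 2 powr (C * X * (log 2 (1 + X) + 1)\<^sup>2 - c * \<epsilon> powr (-1 / s))"
proof -
  note bound = measure_nn_approx_set_le[OF crit \<rho> _ \<open>0 < \<epsilon>\<close> ball, of _ \<sigma>, folded C_def]
  show "(\<Union>W\<in>{1..nat \<lfloor>X\<rfloor>}. nn_approx_set \<rho> \<sigma> \<Omega> S W \<epsilon>) \<in> sets P"
    using bound(1) by auto
  have "measure P (\<Union>W\<in>{1..nat \<lfloor>X\<rfloor>}. nn_approx_set \<rho> \<sigma> \<Omega> S W \<epsilon>)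
        \<le> (\<Sum>W\<in>{1..nat \<lfloor>X\<rfloor>}. measure P (nn_approx_set \<rho> \<sigma> \<Omega> S W \<epsilon>))"
    using bound(1) by (intro measure_UNION_le) auto
  also have "\<dots> \<le> (\<Sum>W\<in>{1..nat \<lfloor>X\<rfloor>}. 2 powr (C * X * (log 2 (1 + X) + 1)\<^sup>2 - c * \<epsilon> powr (-1 / s)))"
  proof (rule sum_mono)
    fix W assume "W \<in> {1..nat \<lfloor>X\<rfloor>}"
    then have W: "1 \<le> W" "real W \<le> X" by auto linarith
    have "0 \<le> log 2 (1 + real W)" "log 2 (1 + real W) \<le> log 2 (1 + X)" using W by auto
    then have "(real_of_int \<lceil>log 2 (1 + real W)\<rceil>)\<^sup>2 \<le> (log 2 (1 + X) + 1)\<^sup>2"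
      by (intro power_mono) linarith+
    then have "C * real W * (real_of_int \<lceil>log 2 (1 + real W)\<rceil>)\<^sup>2 \<le> C * X * (log 2 (1 + X) + 1)\<^sup>2"
      using W(2) by (intro mult_mono) (auto simp: C_def)
    then show "measure P (nn_approx_set \<rho> \<sigma> \<Omega> S W \<epsilon>)
               \<le> 2 powr (C * X * (log 2 (1 + X) + 1)\<^sup>2 - c * \<epsilon> powr (-1 / s))"
      using bound(2)[OF W(1)] by (smt (verit) powr_mono)
  qed
  also have "\<dots> \<le> X * 2 powr (C * X * (log 2 (1 + X) + 1)\<^sup>2 - c * \<epsilon> powr (-1 / s))"
    using \<open>0 \<le> X\<close> by (simp add: mult_right_mono of_nat_floor)
  finally show "measure P (\<Union>W\<in>{1..nat \<lfloor>X\<rfloor>}. nn_approx_set \<rho> \<sigma> \<Omega> S W \<epsilon>)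
                \<le> X * 2 powr (C * X * (log 2 (1 + X) + 1)\<^sup>2 - c * \<epsilon> powr (-1 / s))" .
qed

lemma count_times_decay_tendsto_0:
  fixes n C c q s :: real
  assumes "0 < n" "0 \<le> C" "0 < c" "0 < q" "0 < s" "q < 1 / s"
  shows "((\<lambda>e. n * e powr (-q) * 2 powr (C * (n * e powr (-q)) * (log 2 (1 + n * e powr (-q)) + 1)\<^sup>2
                                     - c * e powr (-1 / s))) \<longlongrightarrow> 0) (at_right 0)"
  using assms by real_asymp

definition rate_set ::
  "(real \<Rightarrow> real) \<Rightarrow> nat \<Rightarrow> (real^'d::finite) set \<Rightarrow> (real^'d \<Rightarrow> real) set \<Rightarrow> real \<Rightarrow> real \<Rightarrow> (real^'d \<Rightarrow> real) set"
  where "rate_set \<rho> \<sigma> \<Omega> S q n = {f \<in> S. \<forall>\<epsilon>. 0 < \<epsilon> \<and> \<epsilon> < 1 \<longrightarrow>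
           (\<exists>W\<ge>1. real W \<le> n * \<epsilon> powr (-q) \<and> f \<in> nn_approx_set \<rho> \<sigma> \<Omega> S W \<epsilon>)}"

lemma rate_set_null:
  fixes \<Omega> :: "(real^'d::finite) set" and \<sigma> :: nat
  assumes crit: "critical_setting \<Omega> S P s_star" and \<rho>: "\<rho> \<in> borel_measurable borel"
    and q: "0 < q" "q < 1 / s_star" and "0 < n"
  shows "\<exists>N\<in>null_sets P. rate_set \<rho> \<sigma> \<Omega> S q n \<subseteq> N"
proof -
  have "0 < s_star" and "prob_space P" using crit by (auto simp: critical_setting_def)
  define s where "s = (s_star + 1 / q) / 2"
  \<comment> \<open>any \<open>s\<close> with \<open>s\<^sup>* < s < 1/q\<close> makes the ball measures beat the number of networks\<close>
  have "s_star < 1 / q" using q \<open>0 < s_star\<close> by (simp add: field_simps)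
  then have s: "s_star < s" "s < 1 / q" by (auto simp: s_def)
  then have "0 < s" "q < 1 / s" using \<open>0 < s_star\<close> q(1) by (auto simp: field_simps)
  obtain c \<epsilon>0 where "c > 0" "\<epsilon>0 > 0" and ball: "\<forall>g\<in>L2set \<Omega>. \<forall>\<epsilon>. 0 < \<epsilon> \<and> \<epsilon> < \<epsilon>0 \<longrightarrow>
      measure P (S \<inter> l2ball \<Omega> g \<epsilon>) \<le> 2 powr (- c * \<epsilon> powr (-1 / s))"
    using crit s(1) unfolding critical_setting_def by blast
  define C where "C = real (nn_count_const \<sigma> CARD('d))"
  define X where "X e = n * e powr (-q)" for e :: real
  define h where "h e = X e * 2 powr (C * X e * (log 2 (1 + X e) + 1)\<^sup>2 - c * e powr (-1 / s))" for e
  have "(h \<longlongrightarrow> 0) (at_right 0)"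
    unfolding h_def X_def using \<open>0 < n\<close> \<open>c > 0\<close> q(1) \<open>0 < s\<close> \<open>q < 1 / s\<close>
    by (intro count_times_decay_tendsto_0) (simp_all add: C_def)
  show ?thesis
  proof (rule null_set_cover_if_small_covers)
    show "finite_measure P" using \<open>prob_space P\<close> by (rule prob_space.finite_measure)
    fix \<delta> :: real assume "\<delta> > 0"
    have "eventually (\<lambda>e. e < min \<epsilon>0 1) (at_right (0::real))"
      by (rule order_tendstoD(2)[OF tendsto_ident_at]) (simp add: \<open>\<epsilon>0 > 0\<close>)
    then have "eventually (\<lambda>e. h e < \<delta> \<and> 0 < e \<and> e < min \<epsilon>0 1) (at_right 0)"
      using order_tendstoD(2)[OF \<open>(h \<longlongrightarrow> 0) (at_right 0)\<close> \<open>\<delta> > 0\<close>] eventually_at_right_less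
      by eventually_elim auto
    then obtain e where e: "h e < \<delta>" "0 < e" "e < \<epsilon>0" "e < 1"
      using eventually_happens'[of "at_right (0::real)"] by auto
    define B where "B = (\<Union>W\<in>{1..nat \<lfloor>X e\<rfloor>}. nn_approx_set \<rho> \<sigma> \<Omega> S W e)"
    have "X e \<ge> 0" using \<open>0 < n\<close> by (simp add: X_def)
    note bound = measure_nn_approx_UN_le[OF crit \<rho> \<open>0 < e\<close> this, of c s \<sigma>, folded C_def B_def]
    have "rate_set \<rho> \<sigma> \<Omega> S q n \<subseteq> B"
    proof
      fix f assume "f \<in> rate_set \<rho> \<sigma> \<Omega> S q n"
      then obtain W where "W \<ge> 1" "real W \<le> X e" "f \<in> nn_approx_set \<rho> \<sigma> \<Omega> S W e"
        using e by (auto simp: rate_set_def X_def)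
      then show "f \<in> B" unfolding B_def by (intro UN_I[of W]) (auto simp: le_nat_floor)
    qed
    moreover have "measure P B < \<delta>"
      using bound(2) ball e by (simp add: h_def)
    ultimately show "\<exists>B\<in>sets P. rate_set \<rho> \<sigma> \<Omega> S q n \<subseteq> B \<and> measure P B < \<delta>"
      using bound(1) ball e by auto
  qed
qed

lemma Astar_subset_rate_sets:
  "Astar \<rho> \<Omega> S s_star \<subseteq> (\<Union>(\<sigma>, r, n) \<in> {(\<sigma>, r, n). 0 < real_of_rat r \<and> real_of_rat r < 1 / s_star \<and> 0 < n}.
                               rate_set \<rho> \<sigma> \<Omega> S (real_of_rat r) (real n))"
proof
  fix f assume "f \<in> Astar \<rho> \<Omega> S s_star"
  then obtain \<tau> \<sigma> C where f: "f \<in> S" "0 < \<tau>" "\<tau> < 1 / s_star" "C > 0"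
    and bound: "\<And>\<epsilon>. 0 < \<epsilon> \<Longrightarrow> \<epsilon> < 1 \<Longrightarrow>
       Weps \<rho> \<sigma> \<Omega> \<epsilon> f \<noteq> \<infinity> \<and> real (the_enat (Weps \<rho> \<sigma> \<Omega> \<epsilon> f)) \<le> C * \<epsilon> powr (- \<tau>)"
    unfolding Astar_def by blast
  obtain r where r: "\<tau> < real_of_rat r" "real_of_rat r < 1 / s_star"
    using Rats_dense_in_real[OF f(3)] by (auto elim: Rats_cases)
  define n where "n = nat \<lceil>C\<rceil>"
  have n: "C \<le> real n" "0 < n" using f(4) by (auto simp: n_def)
  have "f \<in> rate_set \<rho> \<sigma> \<Omega> S (real_of_rat r) (real n)"
    unfolding rate_set_def
  proof (intro CollectI conjI allI impI f(1))
    fix \<epsilon> :: real assume \<epsilon>: "0 < \<epsilon> \<and> \<epsilon> < 1"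
    then have finite: "Weps \<rho> \<sigma> \<Omega> \<epsilon> f \<noteq> \<infinity>"
      and le: "real (the_enat (Weps \<rho> \<sigma> \<Omega> \<epsilon> f)) \<le> C * \<epsilon> powr (- \<tau>)"
      using bound by auto
    obtain W where W: "W \<ge> 1" "\<exists>g\<in>NNset \<rho> \<sigma> W. f \<in> l2ball \<Omega> g \<epsilon>"
      "Weps \<rho> \<sigma> \<Omega> \<epsilon> f = enat W"
      by (rule Weps_attained[OF finite])
    have "C * \<epsilon> powr (- \<tau>) \<le> real n * \<epsilon> powr (- real_of_rat r)"
      using \<epsilon> r(1) n(1) f(4) by (intro mult_mono powr_mono') auto
    then show "\<exists>W\<ge>1. real W \<le> real n * \<epsilon> powr (- real_of_rat r) \<and> f \<in> nn_approx_set \<rho> \<sigma> \<Omega> S W \<epsilon>"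
      using W f(1) le by (auto simp: nn_approx_set_def)
  qed
  moreover have "0 < real_of_rat r" using f(2) r(1) by linarith
  ultimately show "f \<in> (\<Union>(\<sigma>, r, n) \<in> {(\<sigma>, r, n). 0 < real_of_rat r \<and> real_of_rat r < 1 / s_star \<and> 0 < n}.
                               rate_set \<rho> \<sigma> \<Omega> S (real_of_rat r) (real n))"
    using r(2) n(2) by blast
qed

lemma outer_prob_Astar_eq_0:
  assumes crit: "critical_setting \<Omega> S P s_star" and \<rho>: "\<rho> \<in> borel_measurable borel"
  shows "outer_prob P (Astar \<rho> \<Omega> S s_star) = 0"
proof -
  define I :: "(nat \<times> rat \<times> nat) set" where "I = {(\<sigma>, r, n). 0 < real_of_rat r \<and> real_of_rat r < 1 / s_star \<and> 0 < n}"
  have "\<forall>i\<in>I. \<exists>N\<in>null_sets P. (case i of (\<sigma>, r, n) \<Rightarrow> rate_set \<rho> \<sigma> \<Omega> S (real_of_rat r) (real n)) \<subseteq> N"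
    using rate_set_null[OF crit \<rho>] by (auto simp: I_def)
  then obtain N where N: "\<And>i. i \<in> I \<Longrightarrow> N i \<in> null_sets P"
    "\<And>i. i \<in> I \<Longrightarrow> (case i of (\<sigma>, r, n) \<Rightarrow> rate_set \<rho> \<sigma> \<Omega> S (real_of_rat r) (real n)) \<subseteq> N i"
    by metis
  have "(\<Union>i\<in>I. N i) \<in> null_sets P" by (intro null_sets_UN' countableI_type N(1))
  moreover have "Astar \<rho> \<Omega> S s_star \<subseteq> (\<Union>i\<in>I. N i)"
  proof
    fix f assume "f \<in> Astar \<rho> \<Omega> S s_star"
    then obtain \<sigma> r n where i: "(\<sigma>, r, n) \<in> I" and "f \<in> rate_set \<rho> \<sigma> \<Omega> S (real_of_rat r) (real n)"
      using Astar_subset_rate_sets[of \<rho> \<Omega> S s_star] unfolding I_def by blast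
    then show "f \<in> (\<Union>i\<in>I. N i)" using N(2)[OF i] by auto
  qed
  ultimately show ?thesis by (rule outer_prob_null_subset)
qed

theorem theorem1p7:
  fixes \<sigma> :: nat
  assumes "\<sigma> \<ge> 1"
  shows "(\<exists>C::nat. \<forall>(\<rho>::real \<Rightarrow> real) (\<Omega>::(real^'d::finite) set) S P s_star.
            \<rho> \<in> borel_measurable borel \<and> \<rho> 0 = 0 \<and> critical_setting \<Omega> S P s_star \<longrightarrow>
            (\<forall>s>s_star. \<exists>c>0. \<exists>\<epsilon>0>0. \<forall>W::nat. \<forall>\<epsilon>. W \<ge> 1 \<and> 0 < \<epsilon> \<and> \<epsilon> < \<epsilon>0 \<longrightarrow>
               outer_prob P {f \<in> S. \<exists>g\<in>NNset \<rho> \<sigma> W. f \<in> l2ball \<Omega> g \<epsilon>}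
                 \<le> 2 powr (real C * real W * (real_of_int \<lceil>log 2 (1 + real W)\<rceil>)\<^sup>2 - c * \<epsilon> powr (-1 / s)))) \<and>
         (\<forall>(\<rho>::real \<Rightarrow> real) (\<Omega>::(real^'d::finite) set) S P s_star.
            \<rho> \<in> borel_measurable borel \<and> \<rho> 0 = 0 \<and> critical_setting \<Omega> S P s_star \<longrightarrow>
            outer_prob P (Astar \<rho> \<Omega> S s_star) = 0)"
proof (intro conjI exI[of _ "nn_count_const \<sigma> CARD('d)"] allI impI)
  fix \<rho> :: "real \<Rightarrow> real" and \<Omega> :: "(real^'d) set" and S P s_star s
  assume "\<rho> \<in> borel_measurable borel \<and> \<rho> 0 = 0 \<and> critical_setting \<Omega> S P s_star" and "s > s_star"
  then show "\<exists>c>0. \<exists>\<epsilon>0>0. \<forall>W::nat. \<forall>\<epsilon>. W \<ge> 1 \<and> 0 < \<epsilon> \<and> \<epsilon> < \<epsilon>0 \<longrightarrow>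
           outer_prob P {f \<in> S. \<exists>g\<in>NNset \<rho> \<sigma> W. f \<in> l2ball \<Omega> g \<epsilon>}
             \<le> 2 powr (real (nn_count_const \<sigma> CARD('d)) * real W * (real_of_int \<lceil>log 2 (1 + real W)\<rceil>)\<^sup>2
                        - c * \<epsilon> powr (-1 / s))"
    using outer_prob_nn_approx_le[of \<Omega> S P s_star \<rho> s \<sigma>] by (simp add: nn_approx_set_def)
next
  fix \<rho> :: "real \<Rightarrow> real" and \<Omega> :: "(real^'d) set" and S P s_star
  assume "\<rho> \<in> borel_measurable borel \<and> \<rho> 0 = 0 \<and> critical_setting \<Omega> S P s_star"
  then show "outer_prob P (Astar \<rho> \<Omega> S s_star) = 0" by (simp add: outer_prob_Astar_eq_0)
qed

end
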